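(* Let $\sigma$ be an erasing $k$-block substitution with $w_\epsilon\neq 1^k$ that satisfies the optimality condition. Then $f_\sigma:\mathbb I\to\mathbb I$ is surjective.
   Context: Notation: $\mathbb I=[0,1]$. $\{0,1\}^*$ and $\{0,1\}^\omega$ denote finite and infinite binary words, and $\epsilon$ is the empty word. For a finite or infinite word $w$, set $0.w=\sum_{i=1}^{|w|}w_i2^{-i}$. For $x\in(0,1]$, $\widetilde x\in\{0,1\}^\omega$ denotes the unique infinite binary expansion of $x$ that does not end in $0^\infty$. Fix $k\ge 2$. An erasing $k$-block substitution is a map $\sigma:\{0,1\}^k\to\{0,1\}^*$ with exactly one block $w_\epsilon$ satisfying $\sigma(w_\epsilon)=\epsilon$; all other blocks have nonempty images. The map $\sigma$ acts on infinite words (and on finite words of length a multiple of $k$) by cutting them into consecutive $k$-blocks and concatenating the images of the blocks. The induced interval map $f_\sigma:\mathbb I\to\mathbb I$ is defined by $f_\sigma(x)=0.\sigma(\widetilde x)$ if $x\in(0,1]$ and $\widetilde x\ne w_\epsilon^\infty$, and $f_\sigma(x)=0$ if $x=0$ or $\widetilde x=w_\epsilon^\infty$. Here $\sigma(\widetilde x)$ may be a finite word. Optimality condition (OC): every $w\in\{0,1\}^\omega$ can be written as an infinite concatenation $w=\prod_{i=1}^\infty\sigma(b_i)$ with blocks $b_i\in\{0,1\}^k$ satisfying $\sigma(b_i)\ne\epsilon$. *)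

theory Defs
  imports Complex_Main
begin

text \<open>Binary digits are booleans (True = 1). Finite words are bool lists,
infinite words are functions nat => bool (position 0 is the first digit).\<close>

definition bit_val :: "bool \<Rightarrow> real" where
  "bit_val b = (if b then 1 else 0)"

definition fin_val :: "bool list \<Rightarrow> real" where
  "fin_val xs = (\<Sum>i<length xs. bit_val (xs ! i) / 2 ^ (i + 1))"

definition inf_val :: "(nat \<Rightarrow> bool) \<Rightarrow> real" where
  "inf_val w = (\<Sum>n. bit_val (w n) / 2 ^ (n + 1))"

definition bin_exp :: "real \<Rightarrow> (nat \<Rightarrow> bool)" where
  "bin_exp x = (THE w. (\<forall>N. \<exists>n\<ge>N. w n) \<and> inf_val w = x)"

definition kblock :: "nat \<Rightarrow> (nat \<Rightarrow> bool) \<Rightarrow> nat \<Rightarrow> bool list" where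
  "kblock k w i = map w [i * k..<(i + 1) * k]"

definition erasing_subst :: "nat \<Rightarrow> (bool list \<Rightarrow> bool list) \<Rightarrow> bool list \<Rightarrow> bool" where
  "erasing_subst k \<sigma> weps \<longleftrightarrow> length weps = k \<and> \<sigma> weps = [] \<and>
     (\<forall>b. length b = k \<and> b \<noteq> weps \<longrightarrow> \<sigma> b \<noteq> [])"

definition img_prefix :: "(bool list \<Rightarrow> bool list) \<Rightarrow> (nat \<Rightarrow> bool list) \<Rightarrow> nat \<Rightarrow> bool list" where
  "img_prefix \<sigma> b n = concat (map (\<lambda>i. \<sigma> (b i)) [0..<n])"

text \<open>0.sigma(w) for an infinite word w (sigma(w) possibly finite): limit of the
  values of the finite prefixes sigma(b_0)...sigma(b_{n-1})\<close>
definition subst_val :: "nat \<Rightarrow> (bool list \<Rightarrow> bool list) \<Rightarrow> (nat \<Rightarrow> bool) \<Rightarrow> real" where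
  "subst_val k \<sigma> w = lim (\<lambda>n. fin_val (img_prefix \<sigma> (kblock k w) n))"

definition f_sigma :: "nat \<Rightarrow> (bool list \<Rightarrow> bool list) \<Rightarrow> bool list \<Rightarrow> real \<Rightarrow> real" where
  "f_sigma k \<sigma> weps x =
     (if 0 < x \<and> x \<le> 1 \<and> \<not> (\<forall>i. kblock k (bin_exp x) i = weps)
      then subst_val k \<sigma> (bin_exp x) else 0)"

definition optimality_cond :: "nat \<Rightarrow> (bool list \<Rightarrow> bool list) \<Rightarrow> bool" where
  "optimality_cond k \<sigma> \<longleftrightarrow>
     (\<forall>w :: nat \<Rightarrow> bool. \<exists>b :: nat \<Rightarrow> bool list.
        (\<forall>i. length (b i) = k \<and> \<sigma> (b i) \<noteq> []) \<and>
        (\<forall>n. img_prefix \<sigma> b n = map w [0..<length (img_prefix \<sigma> b n)]))"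

end

theory Submission
  imports Defs
begin

text \<open>Given y in (0,1], take its binary expansion w and a decomposition
  w = \<sigma>(b_0) \<sigma>(b_1) ... from the optimality condition.  Inserting the
  erased block w_eps after every b_i does not change the image under \<sigma>, but
  guarantees a 1 in every pair of consecutive blocks: either w_eps contains a 1,
  or w_eps = 0^k and then the non-erased blocks b_i do.  So the concatenated word
  is the binary expansion of some x in (0,1], and f_\<sigma>(x) = y.\<close>

lemma bit_val_bounds[simp]: "0 \<le> bit_val b" "bit_val b \<le> 1"
  by (auto simp: bit_val_def)

lemma fin_val_Nil[simp]: "fin_val [] = 0" by (simp add: fin_val_def)

lemma fin_val_Cons[simp]: "fin_val (x#xs) = (bit_val x + fin_val xs) / 2"
proof -
  have "fin_val (x#xs) = (\<Sum>i<Suc (length xs). bit_val ((x#xs) ! i) / 2 ^ (i + 1))"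
    by (simp add: fin_val_def)
  also have "\<dots> = bit_val x / 2 + (\<Sum>i<length xs. bit_val (xs ! i) / 2 ^ (i + 2))"
    by (subst sum.lessThan_Suc_shift) simp
  also have "(\<Sum>i<length xs. bit_val (xs ! i) / 2 ^ (i + 2)) = fin_val xs / 2"
    by (simp add: fin_val_def sum_divide_distrib)
  finally show ?thesis by simp
qed

lemma fin_val_append: "fin_val (xs @ ys) = fin_val xs + fin_val ys / 2 ^ length xs"
  by (induction xs) (auto simp: field_simps)

lemma fin_val_bounds: "0 \<le> fin_val xs" "fin_val xs \<le> 1"
  by (induction xs) (simp_all, metis add_mono bit_val_bounds(2) one_add_one)

lemma fin_val_le_append: "fin_val xs \<le> fin_val (xs @ ys)"
  using fin_val_bounds[of ys] by (simp add: fin_val_append)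

lemma fin_val_map_upt: "fin_val (map w [0..<m]) = (\<Sum>i<m. bit_val (w i) / 2 ^ (i + 1))"
  by (simp add: fin_val_def)

lemma img_prefix_Suc: "img_prefix \<sigma> b (Suc n) = img_prefix \<sigma> b n @ \<sigma> (b n)"
  by (simp add: img_prefix_def)

lemma subst_val_in_unit: "subst_val k \<sigma> w \<in> {0..1}"
proof -
  let ?s = "\<lambda>n. fin_val (img_prefix \<sigma> (kblock k w) n)"
  have "incseq ?s" by (rule incseq_SucI) (simp add: img_prefix_Suc fin_val_le_append)
  from incseq_convergent[OF this, of 1] obtain L where L: "?s \<longlonglongrightarrow> L"
    using fin_val_bounds(2) by blast
  then have "0 \<le> L" "L \<le> 1"
    by (simp_all add: LIMSEQ_le_const LIMSEQ_le_const2 fin_val_bounds)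
  with L show ?thesis by (simp add: subst_val_def limI)
qed

lemma f_sigma_in_unit: "f_sigma k \<sigma> weps x \<in> {0..1}"
  using subst_val_in_unit by (simp add: f_sigma_def)

lemma summable_bit_series: "summable (\<lambda>n. bit_val (w n) / 2 ^ (n + 1))"
proof (rule summable_comparison_test')
  show "summable (\<lambda>n. (1/2::real) ^ Suc n)" using power_half_series sums_summable by blast
  show "norm (bit_val (w n) / 2 ^ (n + 1)) \<le> (1/2) ^ Suc n" for n
    by (simp add: power_divide divide_right_mono)
qed

lemma inf_val_le_1: "inf_val w \<le> 1"
proof -
  have "inf_val w \<le> (\<Sum>n. (1/2::real) ^ Suc n)" unfolding inf_val_def
    using summable_bit_series sums_summable[OF power_half_series]
    by (intro suminf_le) (simp_all add: power_divide divide_right_mono)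
  then show ?thesis using sums_unique[OF power_half_series] by simp
qed

lemma inf_val_pos:
  assumes "w n"
  shows "0 < inf_val w"
  unfolding inf_val_def
  by (rule suminf_pos2[OF summable_bit_series, of _ n]) (use assms in \<open>auto simp: bit_val_def\<close>)

lemma inf_val_in_unit:
  assumes "\<forall>N. \<exists>n\<ge>N. w n"
  shows "inf_val w \<in> {0<..1}"
  using assms inf_val_pos inf_val_le_1 by auto

lemma inf_val_head: "inf_val w = (bit_val (w 0) + inf_val (\<lambda>i. w (Suc i))) / 2"
proof -
  let ?f = "\<lambda>n. bit_val (w n) / 2 ^ (n + 1)"
  have "inf_val (\<lambda>i. w (Suc i)) / 2 = (\<Sum>n. ?f (Suc n))"
    unfolding inf_val_def suminf_divide[OF summable_bit_series, symmetric] by simp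
  also have "\<dots> = inf_val w - ?f 0"
    unfolding inf_val_def by (rule suminf_split_head[OF summable_bit_series])
  finally show ?thesis by simp
qed

lemma inf_val_shift: "inf_val w = fin_val (map w [0..<n]) + inf_val (\<lambda>i. w (i + n)) / 2 ^ n"
proof (induction n)
  case (Suc n)
  have "inf_val (\<lambda>i. w (i + n)) = (bit_val (w n) + inf_val (\<lambda>i. w (i + Suc n))) / 2"
    using inf_val_head[of "\<lambda>i. w (i + n)"] by simp
  with Suc show ?case by (simp add: fin_val_append field_simps)
qed simp

lemma inf_val_le_half: "\<not> w 0 \<Longrightarrow> inf_val w \<le> 1 / 2"
  using inf_val_head[of w] inf_val_le_1[of "\<lambda>i. w (Suc i)"] by (simp add: bit_val_def)

lemma inf_val_gt_half:
  assumes "w 0" and "\<forall>N. \<exists>n\<ge>N. w n"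
  shows "1 / 2 < inf_val w"
proof -
  obtain n where "n \<ge> 1" "w n" using assms(2) by blast
  then have "0 < inf_val (\<lambda>i. w (Suc i))" using inf_val_pos[of "\<lambda>i. w (Suc i)" "n - 1"] by simp
  with assms(1) show ?thesis using inf_val_head[of w] by (simp add: bit_val_def)
qed

lemma inf_val_less:
  assumes eq: "\<forall>i<n. v i = w i" and "v n" "\<not> w n" and frequently: "\<forall>N. \<exists>m\<ge>N. v m"
  shows "inf_val w < inf_val v"
proof -
  have "\<forall>N. \<exists>m\<ge>N. v (m + n)"
  proof
    fix N
    obtain m where "m \<ge> N + n" "v m" using frequently by blast
    then show "\<exists>m\<ge>N. v (m + n)" by (intro exI[of _ "m - n"]) simp
  qed
  then have "inf_val (\<lambda>i. w (i + n)) < inf_val (\<lambda>i. v (i + n))"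
    using inf_val_le_half[of "\<lambda>i. w (i + n)"] inf_val_gt_half[of "\<lambda>i. v (i + n)"] assms(2,3)
    by simp
  then have "inf_val (\<lambda>i. w (i + n)) / 2 ^ n < inf_val (\<lambda>i. v (i + n)) / 2 ^ n"
    by (simp add: divide_strict_right_mono)
  moreover have "fin_val (map w [0..<n]) = fin_val (map v [0..<n])"
    using eq by (intro arg_cong[where f = fin_val] map_cong) auto
  ultimately show ?thesis using inf_val_shift[of v n] inf_val_shift[of w n] by linarith
qed

lemma inf_val_inj:
  assumes "\<forall>N. \<exists>m\<ge>N. v m" "\<forall>N. \<exists>m\<ge>N. w m" "inf_val v = inf_val w"
  shows "v = w"
proof (rule ccontr)
  assume "v \<noteq> w"
  then have "\<exists>i. v i \<noteq> w i" by blast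
  define n where "n = (LEAST i. v i \<noteq> w i)"
  have n: "v n \<noteq> w n" unfolding n_def by (rule LeastI_ex) fact
  have lt: "\<forall>i<n. v i = w i" unfolding n_def using not_less_Least by blast
  show False
  proof (cases "v n")
    case True
    then show ?thesis using inf_val_less[of n v w] lt n assms by auto
  next
    case False
    then show ?thesis using inf_val_less[of n w v] lt n assms by auto
  qed
qed

lemma bin_exp_inf_val:
  assumes "\<forall>N. \<exists>m\<ge>N. u m"
  shows "bin_exp (inf_val u) = u"
  unfolding bin_exp_def
  by (rule the_equality) (use assms inf_val_inj in auto)

text \<open>The largest integer strictly below 2^n y.  Strictness is what makes the
  resulting digits avoid a tail 0^\<infinity>.\<close>

definition dyadic_below :: "real \<Rightarrow> nat \<Rightarrow> int" where
  "dyadic_below y n = \<lceil>2 ^ n * y\<rceil> - 1"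

definition dyadic_digit :: "real \<Rightarrow> nat \<Rightarrow> bool" where
  "dyadic_digit y n \<longleftrightarrow> dyadic_below y (Suc n) = 2 * dyadic_below y n + 1"

lemma dyadic_below_bounds:
  "real_of_int (dyadic_below y n) < 2 ^ n * y" "2 ^ n * y \<le> real_of_int (dyadic_below y n) + 1"
  using ceiling_correct[of "2 ^ n * y"] by (auto simp: dyadic_below_def)

lemma dyadic_below_Suc:
  "real_of_int (dyadic_below y (Suc n)) = 2 * dyadic_below y n + bit_val (dyadic_digit y n)"
proof -
  have "real_of_int (2 * dyadic_below y n) < real_of_int (dyadic_below y (Suc n) + 1)"
    and "real_of_int (dyadic_below y (Suc n)) < real_of_int (2 * dyadic_below y n + 2)"
    using dyadic_below_bounds[where y = y and n = n] dyadic_below_bounds[where y = y and n = "Suc n"]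
    by simp_all
  then have "dyadic_below y (Suc n) \<in> {2 * dyadic_below y n, 2 * dyadic_below y n + 1}"
    by auto
  then show ?thesis by (auto simp: dyadic_digit_def bit_val_def)
qed

lemma tendsto_dyadic_below: "(\<lambda>n. real_of_int (dyadic_below y n) / 2 ^ n) \<longlonglongrightarrow> y"
proof (rule tendsto_sandwich)
  have "y - 1 / 2 ^ n \<le> dyadic_below y n / 2 ^ n" for n
  proof -
    have "y - 1 / 2 ^ n = (2 ^ n * y - 1) / 2 ^ n" by (simp add: field_simps)
    also have "\<dots> \<le> dyadic_below y n / 2 ^ n"
      using dyadic_below_bounds(2)[where y = y and n = n] by (intro divide_right_mono) auto
    finally show ?thesis .
  qed
  then show "\<forall>\<^sub>F n in sequentially. y - 1 / 2 ^ n \<le> dyadic_below y n / 2 ^ n"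
    by simp
  show "\<forall>\<^sub>F n in sequentially. dyadic_below y n / 2 ^ n \<le> y"
    using dyadic_below_bounds(1)[where y = y] by (auto simp: field_simps less_imp_le)
  show "(\<lambda>n. y - 1 / 2 ^ n) \<longlonglongrightarrow> y"
    using tendsto_diff[OF tendsto_const LIMSEQ_divide_realpow_zero[of 2 1]] by simp
qed simp

lemma dyadic_digit_sums:
  assumes "0 < y" "y \<le> 1"
  shows "(\<lambda>i. bit_val (dyadic_digit y i) / 2 ^ (i + 1)) sums y"
proof -
  have "dyadic_below y 0 = 0" using assms by (simp add: dyadic_below_def ceiling_unique)
  then have "(\<Sum>i<n. bit_val (dyadic_digit y i) / 2 ^ (i + 1)) = dyadic_below y n / 2 ^ n" for n
    by (induction n) (simp_all add: dyadic_below_Suc field_simps)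
  with tendsto_dyadic_below show ?thesis by (simp add: sums_def)
qed

lemma dyadic_digit_frequently: "\<forall>N. \<exists>n\<ge>N. dyadic_digit y n"
proof (rule ccontr)
  assume "\<not> (\<forall>N. \<exists>n\<ge>N. dyadic_digit y n)"
  then obtain N where N: "\<forall>n\<ge>N. \<not> dyadic_digit y n" by auto
  have "dyadic_below y (j + N) / 2 ^ (j + N) = dyadic_below y N / 2 ^ N" for j
    by (induction j) (simp_all add: N dyadic_below_Suc bit_val_def field_simps)
  then have "(\<lambda>j. dyadic_below y N / 2 ^ N) \<longlonglongrightarrow> y"
    using LIMSEQ_ignore_initial_segment[OF tendsto_dyadic_below, of y N] by simp
  then have "dyadic_below y N / 2 ^ N = y" by (simp add: LIMSEQ_const_iff)
  with dyadic_below_bounds(1)[where y = y and n = N] show False by (simp add: field_simps)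
qed

lemma exists_binary_expansion:
  assumes "0 < y" "y \<le> 1"
  shows "\<exists>w. (\<forall>N. \<exists>n\<ge>N. w n) \<and> inf_val w = y"
  using dyadic_digit_frequently[of y] sums_unique[OF dyadic_digit_sums[OF assms]]
  by (intro exI[of _ "dyadic_digit y"]) (simp add: inf_val_def)

lemma length_img_prefix_ge:
  assumes "\<And>i. \<sigma> (b i) \<noteq> []"
  shows "n \<le> length (img_prefix \<sigma> b n)"
proof (induction n)
  case (Suc n)
  have "\<sigma> (b n) \<noteq> []" by (fact assms)
  with Suc show ?case by (cases "\<sigma> (b n)") (auto simp: img_prefix_Suc)
qed simp

lemma tendsto_fin_val_img_prefix:
  assumes nonempty: "\<And>i. \<sigma> (b i) \<noteq> []"
    and prefix: "\<And>n. img_prefix \<sigma> b n = map w [0..<length (img_prefix \<sigma> b n)]"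
  shows "(\<lambda>n. fin_val (img_prefix \<sigma> b n)) \<longlonglongrightarrow> inf_val w"
proof -
  have partial_sums: "(\<lambda>m. fin_val (map w [0..<m])) \<longlonglongrightarrow> inf_val w"
    using summable_LIMSEQ[OF summable_bit_series] by (simp add: fin_val_map_upt inf_val_def)
  have "filterlim (\<lambda>n. length (img_prefix \<sigma> b n)) at_top sequentially"
    by (rule filterlim_at_top_mono[OF filterlim_ident]) (simp add: length_img_prefix_ge nonempty)
  from filterlim_compose[OF partial_sums this] show ?thesis
    by (subst prefix) (simp add: o_def)
qed

definition interleave_erased :: "(nat \<Rightarrow> bool list) \<Rightarrow> bool list \<Rightarrow> nat \<Rightarrow> bool list" where
  "interleave_erased b e i = (if even i then b (i div 2) else e)"

lemma img_prefix_interleave_erased: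
  assumes "\<sigma> e = []"
  shows "img_prefix \<sigma> (interleave_erased b e) n = img_prefix \<sigma> b ((n + 1) div 2)"
proof (induction n)
  case (Suc n)
  show ?case
  proof (cases "even n")
    case True
    then have "(Suc n + 1) div 2 = Suc ((n + 1) div 2)" "(n + 1) div 2 = n div 2"
      by presburger+
    with Suc True show ?thesis by (simp add: img_prefix_Suc interleave_erased_def)
  next
    case False
    then have "(Suc n + 1) div 2 = (n + 1) div 2" by presburger
    with Suc False assms show ?thesis by (simp add: img_prefix_Suc interleave_erased_def)
  qed
qed (simp add: img_prefix_def)

lemma tendsto_fin_val_img_prefix_interleave_erased:
  assumes "\<sigma> e = []" and "(\<lambda>n. fin_val (img_prefix \<sigma> b n)) \<longlonglongrightarrow> L"
  shows "(\<lambda>n. fin_val (img_prefix \<sigma> (interleave_erased b e) n)) \<longlonglongrightarrow> L"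
proof -
  have "\<exists>N. \<forall>n\<ge>N. Z \<le> (n + 1) div 2" for Z :: nat
    by (rule exI[of _ "2 * Z"]) linarith
  then have "filterlim (\<lambda>n. (n + 1) div 2) at_top sequentially"
    unfolding filterlim_at_top eventually_sequentially by blast
  from filterlim_compose[OF assms(2) this] show ?thesis
    by (simp add: img_prefix_interleave_erased assms(1) o_def)
qed

lemma True_in_interleave_erased:
  assumes "length e = k" "\<And>i. length (b i) = k" "\<And>i. b i \<noteq> e"
  shows "\<exists>i\<ge>m. True \<in> set (interleave_erased b e i)"
proof (cases "True \<in> set e")
  case True
  then show ?thesis by (intro exI[of _ "2 * m + 1"]) (simp add: interleave_erased_def)
next
  case False
  then have "\<forall>x\<in>set e. x = False" by auto
  then have "e = replicate k False"
    using replicate_length_same[of e False] assms(1) by simp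
  moreover have "b m \<noteq> e" by (fact assms(3))
  ultimately have "True \<in> set (b m)"
    using replicate_length_same[of "b m" False] assms(2)[of m] by (metis (full_types))
  then show ?thesis by (intro exI[of _ "2 * m"]) (simp add: interleave_erased_def)
qed

definition blocks_word :: "nat \<Rightarrow> (nat \<Rightarrow> bool list) \<Rightarrow> nat \<Rightarrow> bool" where
  "blocks_word k c n = c (n div k) ! (n mod k)"

lemma blocks_word_block:
  assumes "j < k"
  shows "blocks_word k c (i * k + j) = c i ! j"
  using assms by (simp add: blocks_word_def)

lemma kblock_blocks_word:
  assumes "\<And>i. length (c i) = k"
  shows "kblock k (blocks_word k c) = c"
proof
  fix i
  show "kblock k (blocks_word k c) i = c i"
  proof (rule nth_equalityI)
    show "length (kblock k (blocks_word k c) i) = length (c i)"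
      by (simp add: kblock_def assms algebra_simps)
    fix j assume "j < length (kblock k (blocks_word k c) i)"
    then have "j < k" by (simp add: kblock_def algebra_simps)
    then show "kblock k (blocks_word k c) i ! j = c i ! j"
      using blocks_word_block[of j k c i] by (simp add: kblock_def add.commute)
  qed
qed

lemma blocks_word_frequently_True:
  assumes "\<And>i. length (c i) = k" and "\<And>m. \<exists>i\<ge>m. True \<in> set (c i)"
  shows "\<forall>N. \<exists>n\<ge>N. blocks_word k c n"
proof
  fix N
  obtain i where "i \<ge> N" "True \<in> set (c i)" using assms(2) by blast
  then obtain j where j: "j < k" "c i ! j" using assms(1) by (auto simp: in_set_conv_nth)
  then have "N \<le> i * k + j" using \<open>i \<ge> N\<close> by (cases k) auto
  with j show "\<exists>n\<ge>N. blocks_word k c n" using blocks_word_block by metis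
qed

lemma f_sigma_inf_val_blocks_word:
  assumes lengths: "\<And>i. length (c i) = k"
    and frequently: "\<forall>N. \<exists>n\<ge>N. blocks_word k c n"
    and not_erased: "c i \<noteq> weps"
    and limit: "(\<lambda>n. fin_val (img_prefix \<sigma> c n)) \<longlonglongrightarrow> L"
  shows "f_sigma k \<sigma> weps (inf_val (blocks_word k c)) = L"
proof -
  have "inf_val (blocks_word k c) \<in> {0<..1}" by (rule inf_val_in_unit[OF frequently])
  moreover have "kblock k (bin_exp (inf_val (blocks_word k c))) = c"
    by (simp add: bin_exp_inf_val[OF frequently] kblock_blocks_word[OF lengths])
  ultimately show ?thesis
    using not_erased limit by (auto simp: f_sigma_def subst_val_def limI)
qed

theorem lemma3p1:
  fixes k :: nat and \<sigma> :: "bool list \<Rightarrow> bool list" and weps :: "bool list"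
  assumes "k \<ge> 2"
    and "erasing_subst k \<sigma> weps"
    and "weps \<noteq> replicate k True"
    and "optimality_cond k \<sigma>"
  shows "f_sigma k \<sigma> weps ` {0..1} = {0..1}"
proof
  show "f_sigma k \<sigma> weps ` {0..1} \<subseteq> {0..1}" using f_sigma_in_unit by blast
  have weps: "length weps = k" "\<sigma> weps = []"
    using assms(2) by (auto simp: erasing_subst_def)
  show "{0..1} \<subseteq> f_sigma k \<sigma> weps ` {0..1}"
  proof
    fix y :: real assume y: "y \<in> {0..1}"
    show "y \<in> f_sigma k \<sigma> weps ` {0..1}"
    proof (cases "y = 0")
      case True
      then show ?thesis by (force simp: f_sigma_def)
    next
      case False
      with y have "0 < y" "y \<le> 1" by auto
      then obtain w where "\<forall>N. \<exists>n\<ge>N. w n" and w: "inf_val w = y"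
        by (blast dest: exists_binary_expansion)
      obtain b where b: "\<And>i. length (b i) = k" "\<And>i. \<sigma> (b i) \<noteq> []"
        and prefix: "\<And>n. img_prefix \<sigma> b n = map w [0..<length (img_prefix \<sigma> b n)]"
        using assms(4) unfolding optimality_cond_def by blast
      define c where "c = interleave_erased b weps"
      have lengths: "length (c i) = k" for i
        using b(1) weps(1) by (simp add: c_def interleave_erased_def)
      have not_erased: "b i \<noteq> weps" for i using b(2) weps(2) by metis
      have frequently: "\<forall>N. \<exists>n\<ge>N. blocks_word k c n"
        using True_in_interleave_erased[OF weps(1) b(1) not_erased]
        by (intro blocks_word_frequently_True[OF lengths]) (simp add: c_def)
      have "(\<lambda>n. fin_val (img_prefix \<sigma> c n)) \<longlonglongrightarrow> y"
        unfolding c_def using tendsto_fin_val_img_prefix[OF b(2) prefix] w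
        by (intro tendsto_fin_val_img_prefix_interleave_erased[of \<sigma>, OF weps(2)]) simp
      then have "f_sigma k \<sigma> weps (inf_val (blocks_word k c)) = y"
        using f_sigma_inf_val_blocks_word[OF lengths frequently, of 0] not_erased
        by (simp add: c_def interleave_erased_def)
      moreover have "inf_val (blocks_word k c) \<in> {0..1}"
        using inf_val_in_unit[OF frequently] by simp
      ultimately show ?thesis by (metis image_eqI)
    qed
  qed
qed

end
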